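(* Consider the $K$-class stochastic block model on $n$ nodes (labels $Z_i$ i.i.d. with probability vector $\pi$; given $Z$, $A_{ij}=A_{ji}$, $i<j$, independent Bernoulli$(P_{Z_iZ_j})$, $A_{ii}=0$, $P$ symmetric with entries in $[0,1]$). For any $x>0$, $$\Pr\Big(\max_{e\in\{1,\dots,K\}^n}\big\|\widetilde O(e)-\mathbb E(\widetilde O(e)\mid Z)\big\|_\infty>xn^2\Big)\le2K^{n+2}e^{-x^2n^2/(8\|P\|_\infty+4x/3)}.$$
   Context: For a labelling $e$, $O_{ab}(e)=\sum_{i,j}A_{ij}1\{e_i=a,e_j=b\}$ for $a\ne b$ and $O_{aa}(e)=\sum_{i<j}A_{ij}1\{e_i=e_j=a\}$; $\widetilde O_{ab}(e)=O_{ab}(e)$ for $a\ne b$ and $\widetilde O_{aa}(e)=2O_{aa}(e)$; $\widetilde O(e)$ is the $K\times K$ matrix of these. For a matrix $M$, $\|M\|_\infty=\max_{a,b}|M_{ab}|$. *)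

theory Defs
  imports "HOL-Analysis.Analysis"
begin

(* Nodes are 0..<n, labels (classes) are 0..<K.
   An adjacency realisation is the set of edges, a subset of the index pairs (i,j) with i<j<n. *)

definition node_pairs :: "nat \<Rightarrow> (nat \<times> nat) set" where
  "node_pairs n = {(i, j). i < j \<and> j < n}"

definition adj :: "(nat \<times> nat) set \<Rightarrow> nat \<Rightarrow> nat \<Rightarrow> real" where
  "adj A i j = (if (min i j, max i j) \<in> A \<and> i \<noteq> j then 1 else 0)"

definition labellings :: "nat \<Rightarrow> nat \<Rightarrow> (nat \<Rightarrow> nat) set" where
  "labellings n K = {0..<n} \<rightarrow>\<^sub>E {0..<K}"

definition Z_weight :: "nat \<Rightarrow> (nat \<Rightarrow> real) \<Rightarrow> (nat \<Rightarrow> nat) \<Rightarrow> real" where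
  "Z_weight n \<pi> z = (\<Prod>i<n. \<pi> (z i))"

definition A_weight :: "nat \<Rightarrow> (nat \<Rightarrow> nat \<Rightarrow> real) \<Rightarrow> (nat \<Rightarrow> nat) \<Rightarrow> (nat \<times> nat) set \<Rightarrow> real" where
  "A_weight n P z A = (\<Prod>p\<in>node_pairs n.
      if p \<in> A then P (z (fst p)) (z (snd p)) else 1 - P (z (fst p)) (z (snd p)))"

definition cond_exp_Z :: "nat \<Rightarrow> (nat \<Rightarrow> nat \<Rightarrow> real) \<Rightarrow> ((nat \<Rightarrow> nat) \<Rightarrow> (nat \<times> nat) set \<Rightarrow> real)
    \<Rightarrow> (nat \<Rightarrow> nat) \<Rightarrow> real" where
  "cond_exp_Z n P f z = (\<Sum>A\<in>Pow (node_pairs n). A_weight n P z A * f z A)"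

definition sbm_prob :: "nat \<Rightarrow> nat \<Rightarrow> (nat \<Rightarrow> real) \<Rightarrow> (nat \<Rightarrow> nat \<Rightarrow> real)
    \<Rightarrow> ((nat \<Rightarrow> nat) \<Rightarrow> (nat \<times> nat) set \<Rightarrow> bool) \<Rightarrow> real" where
  "sbm_prob n K \<pi> P E = (\<Sum>z\<in>labellings n K. \<Sum>A\<in>Pow (node_pairs n).
      (if E z A then Z_weight n \<pi> z * A_weight n P z A else 0))"

definition O_count :: "nat \<Rightarrow> (nat \<times> nat) set \<Rightarrow> (nat \<Rightarrow> nat) \<Rightarrow> nat \<Rightarrow> nat \<Rightarrow> real" where
  "O_count n A e a b =
     (if a \<noteq> b then (\<Sum>i<n. \<Sum>j<n. adj A i j * (if e i = a \<and> e j = b then 1 else 0))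
      else (\<Sum>i<n. \<Sum>j<n. if i < j then adj A i j * (if e i = a \<and> e j = a then 1 else 0) else 0))"

definition O_tilde :: "nat \<Rightarrow> (nat \<times> nat) set \<Rightarrow> (nat \<Rightarrow> nat) \<Rightarrow> nat \<Rightarrow> nat \<Rightarrow> real" where
  "O_tilde n A e a b = (if a = b then 2 * O_count n A e a a else O_count n A e a b)"

definition max_norm :: "nat \<Rightarrow> (nat \<Rightarrow> nat \<Rightarrow> real) \<Rightarrow> real" where
  "max_norm K M = Max {\<bar>M a b\<bar> | a b. a < K \<and> b < K}"

end

theory Submission
  imports Defs
begin

text \<open>Given \<open>Z = z\<close>, each entry of \<open>O_tilde(e) - E(O_tilde(e) | Z)\<close> is a sum, over the
  node pairs \<open>i < j\<close>, of independent centred Bernoulli(\<open>P (z i) (z j)\<close>) variables with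
  coefficients in \<open>{0, 1, 2}\<close>. Chernoff's exponential-moment method together with
  \<open>exp u - 1 - u \<le> u\<^sup>2 / (2 (1 - u/3))\<close> (Bernstein's inequality) bounds each of its two tails by
  \<open>exp (- x\<^sup>2 n\<^sup>2 / (8 \<parallel>P\<parallel> + 4x/3))\<close>, and a union bound over the \<open>K\<^sup>n\<close> labellings \<open>e\<close>
  and the \<open>K\<^sup>2\<close> entries gives the factor \<open>K\<^sup>(n+2)\<close>. Averaging over \<open>Z\<close> preserves the bound.\<close>

definition exp_remainder :: "real \<Rightarrow> real" where
  "exp_remainder u = exp u - 1 - u"

lemma exp_remainder_zero [simp]: "exp_remainder 0 = 0"
  by (simp add: exp_remainder_def)

lemma exp_remainder_nonneg: "0 \<le> exp_remainder u"
  unfolding exp_remainder_def using exp_ge_add_one_self[of u] by linarith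

lemma exp_remainder_mono:
  assumes "0 \<le> u" "u \<le> v"
  shows "exp_remainder u \<le> exp_remainder v"
proof -
  have "exp u * (1 + (v - u)) \<le> exp u * exp (v - u)"
    using exp_ge_add_one_self[of "v - u"] by (intro mult_left_mono) auto
  also have "\<dots> = exp v" by (simp flip: exp_add)
  finally have "exp u + exp u * (v - u) \<le> exp v" by (simp add: algebra_simps)
  moreover have "v - u \<le> exp u * (v - u)"
    using mult_right_mono[of 1 "exp u" "v - u"] assms by simp
  ultimately show ?thesis unfolding exp_remainder_def by linarith
qed

lemma exp_minus_le_quadratic:
  fixes u :: real
  assumes "0 \<le> u"
  shows "exp (- u) \<le> 1 - u + u\<^sup>2 / 2"
proof -
  obtain t where t: "exp (- u) = (\<Sum>m<3. (- u) ^ m / fact m) + exp t / fact 3 * (- u) ^ 3"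
    using Maclaurin_exp_le[of "- u" 3] by blast
  have "exp t / fact 3 * (- u) ^ 3 \<le> 0"
    using assms by (intro mult_nonneg_nonpos) (auto simp: power_odd_eq)
  moreover have "(\<Sum>m<3. (- u) ^ m / fact m) = 1 - u + u\<^sup>2 / 2"
    by (simp add: numeral_3_eq_3 power2_eq_square)
  ultimately show ?thesis using t by linarith
qed

lemma exp_remainder_le_of_abs_le:
  assumes "\<bar>v\<bar> \<le> w"
  shows "exp_remainder v \<le> exp_remainder w"
proof (cases "0 \<le> v")
  case True
  then show ?thesis using assms exp_remainder_mono by simp
next
  case False
  then have "exp_remainder v \<le> v\<^sup>2 / 2"
    using exp_minus_le_quadratic[of "- v"] by (simp add: exp_remainder_def)
  also have "\<dots> \<le> exp_remainder (- v)"
    using exp_lower_Taylor_quadratic[of "- v"] False by (simp add: exp_remainder_def)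
  also have "\<dots> \<le> exp_remainder w"
    using False assms by (intro exp_remainder_mono) auto
  finally show ?thesis .
qed

lemma two_mult_three_power_le_fact: "2 * 3 ^ k \<le> (fact (k + 2) :: real)"
proof (induction k)
  case 0
  then show ?case by (simp add: numeral_2_eq_2)
next
  case (Suc k)
  have "3 * (2 * 3 ^ k) \<le> real (k + 3) * (fact (k + 2) :: real)"
    using Suc by (intro mult_mono) auto
  also have "\<dots> = fact (Suc k + 2)"
    by (simp add: numeral_3_eq_3 numeral_2_eq_2 algebra_simps)
  finally show ?case by simp
qed

text \<open>From the quadratic term on, the exponential series is dominated by a geometric series of
  ratio \<open>m / 3\<close>.\<close>
lemma exp_remainder_le_Bernstein:
  assumes "0 \<le> m" "m < 3"
  shows "exp_remainder m \<le> m\<^sup>2 / (2 * (1 - m / 3))"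
proof -
  have "(\<lambda>k. m ^ k / fact k) sums exp m"
    using exp_converges[of m] by (simp add: divide_inverse_commute)
  then have "(\<lambda>k. m ^ (k + 2) / fact (k + 2)) sums (exp m - (\<Sum>k<2. m ^ k / fact k))"
    by (subst sums_iff_shift) simp
  then have tail: "(\<lambda>k. m ^ (k + 2) / fact (k + 2)) sums exp_remainder m"
    by (simp add: exp_remainder_def numeral_2_eq_2 diff_diff_eq)
  have geometric: "(\<lambda>k. m\<^sup>2 / 2 * (m / 3) ^ k) sums (m\<^sup>2 / 2 * (1 / (1 - m / 3)))"
    using assms by (intro sums_mult geometric_sums) auto
  have "m ^ (k + 2) / fact (k + 2) \<le> m\<^sup>2 / 2 * (m / 3) ^ k" for k
  proof -
    have "m ^ (k + 2) / fact (k + 2) \<le> m ^ (k + 2) / (2 * 3 ^ k)"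
      using assms two_mult_three_power_le_fact[of k] by (intro divide_left_mono) auto
    also have "\<dots> = m\<^sup>2 / 2 * (m / 3) ^ k"
      by (simp add: power_add power_divide power2_eq_square)
    finally show ?thesis .
  qed
  then have "exp_remainder m \<le> m\<^sup>2 / 2 * (1 / (1 - m / 3))"
    using tail geometric by (rule sums_le)
  then show ?thesis by simp
qed

text \<open>For \<open>V > 0\<close> the Chernoff parameter \<open>t / D\<close> satisfies \<open>1 - (t / D) C / 3 = C\<^sup>2 V / D\<close>,
  which makes \<open>exp_remainder_le_Bernstein\<close> give exactly \<open>t\<^sup>2 / (2 D)\<close>.\<close>
lemma Bernstein_exponent_le:
  fixes t C V :: real
  assumes t: "0 \<le> t" and C: "0 < C" and V: "0 \<le> V"
  defines "D \<equiv> C\<^sup>2 * V + C * t / 3"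
  shows "- (t / D) * t + V * exp_remainder (t / D * C) \<le> - t\<^sup>2 / (2 * D)"
proof (cases "t = 0")
  case True
  then show ?thesis by simp
next
  case False
  with t have t: "0 < t" by simp
  have D: "0 < D" using t C V by (simp add: D_def add_nonneg_pos)
  show ?thesis
  proof (cases "V = 0")
    case True
    then show ?thesis using D by (simp add: power2_eq_square divide_le_eq field_simps)
  next
    case False
    with V have V: "0 < V" by simp
    define m where "m = t / D * C"
    have m: "0 \<le> m" "m < 3"
      using t C V D by (auto simp: m_def D_def field_simps)
    have "1 - m / 3 = C\<^sup>2 * V / D"
      using D by (simp add: m_def D_def field_simps power2_eq_square)
    then have "V * exp_remainder m \<le> V * (m\<^sup>2 / (2 * (C\<^sup>2 * V / D)))"
      using exp_remainder_le_Bernstein[OF m] V by (intro mult_left_mono) auto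
    also have "\<dots> = t\<^sup>2 / (2 * D)"
      using C V D by (simp add: m_def field_simps power2_eq_square)
    finally show ?thesis
      using D by (simp add: m_def power2_eq_square field_simps)
  qed
qed

definition bernoulli_weight :: "('a \<Rightarrow> real) \<Rightarrow> 'a set \<Rightarrow> 'a set \<Rightarrow> real" where
  "bernoulli_weight q N X = (\<Prod>p\<in>N. if p \<in> X then q p else 1 - q p)"

lemma sum_Pow_prod_eq_prod_add:
  fixes f :: "'a \<Rightarrow> bool \<Rightarrow> real"
  assumes "finite N"
  shows "(\<Sum>X\<in>Pow N. \<Prod>p\<in>N. f p (p \<in> X)) = (\<Prod>p\<in>N. f p True + f p False)"
proof -
  have "(\<Prod>p\<in>N. f p True + f p False)
      = (\<Sum>X\<in>Pow N. (\<Prod>p\<in>X. f p True) * (\<Prod>p\<in>N - X. f p False))"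
    by (rule prod_add[OF assms])
  also have "\<dots> = (\<Sum>X\<in>Pow N. \<Prod>p\<in>N. f p (p \<in> X))"
  proof (rule sum.cong[OF refl])
    fix X assume X: "X \<in> Pow N"
    have "(\<Prod>p\<in>N. f p (p \<in> X)) = (\<Prod>p\<in>N - X. f p (p \<in> X)) * (\<Prod>p\<in>X. f p (p \<in> X))"
      using X assms by (intro prod.subset_diff) auto
    also have "\<dots> = (\<Prod>p\<in>N - X. f p False) * (\<Prod>p\<in>X. f p True)"
      by (intro arg_cong2[where f = "(*)"] prod.cong) auto
    finally show "(\<Prod>p\<in>X. f p True) * (\<Prod>p\<in>N - X. f p False) = (\<Prod>p\<in>N. f p (p \<in> X))"
      by simp
  qed
  finally show ?thesis by simp
qed

lemma bernoulli_weight_nonneg: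
  "(\<And>p. p \<in> N \<Longrightarrow> 0 \<le> q p \<and> q p \<le> 1) \<Longrightarrow> 0 \<le> bernoulli_weight q N X"
  unfolding bernoulli_weight_def by (intro prod_nonneg) auto

lemma sum_bernoulli_weight_indicator:
  assumes "finite N" "p0 \<in> N"
  shows "(\<Sum>X\<in>Pow N. bernoulli_weight q N X * of_bool (p0 \<in> X)) = q p0"
proof -
  define f where
    "f p b = (if b then q p else if p = p0 then 0 else 1 - q p)" for p b
  have "bernoulli_weight q N X * of_bool (p0 \<in> X) = (\<Prod>p\<in>N. f p (p \<in> X))" for X
  proof -
    have "bernoulli_weight q N X
        = (if p0 \<in> X then q p0 else 1 - q p0) * (\<Prod>p\<in>N - {p0}. if p \<in> X then q p else 1 - q p)"
      unfolding bernoulli_weight_def using assms by (intro prod.remove)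
    also have "(\<Prod>p\<in>N - {p0}. if p \<in> X then q p else 1 - q p) = (\<Prod>p\<in>N - {p0}. f p (p \<in> X))"
      by (intro prod.cong) (auto simp: f_def)
    moreover have "(\<Prod>p\<in>N. f p (p \<in> X)) = f p0 (p0 \<in> X) * (\<Prod>p\<in>N - {p0}. f p (p \<in> X))"
      using assms by (intro prod.remove)
    ultimately show ?thesis by (simp add: f_def)
  qed
  then have "(\<Sum>X\<in>Pow N. bernoulli_weight q N X * of_bool (p0 \<in> X)) = (\<Prod>p\<in>N. f p True + f p False)"
    using sum_Pow_prod_eq_prod_add[OF assms(1)] by simp
  also have "\<dots> = (f p0 True + f p0 False) * (\<Prod>p\<in>N - {p0}. f p True + f p False)"
    using assms by (intro prod.remove)
  also have "(\<Prod>p\<in>N - {p0}. f p True + f p False) = 1"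
    by (intro prod.neutral) (auto simp: f_def)
  finally show ?thesis by (simp add: f_def)
qed

lemma bernoulli_centered_mgf_le:
  fixes q v :: real
  assumes "0 \<le> q" "q \<le> 1"
  shows "q * exp (v * (1 - q)) + (1 - q) * exp (v * (0 - q)) \<le> exp (q * exp_remainder v)"
proof -
  have "q * exp (v * (1 - q)) + (1 - q) * exp (v * (0 - q)) = exp (- v * q) * (1 + q * (exp v - 1))"
    by (simp add: algebra_simps exp_diff exp_minus field_simps)
  also have "\<dots> \<le> exp (- v * q) * exp (q * (exp v - 1))"
    by (intro mult_left_mono) (auto simp: exp_ge_add_one_self)
  also have "\<dots> = exp (q * exp_remainder v)"
    by (simp add: exp_remainder_def flip: exp_add) (simp add: algebra_simps)
  finally show ?thesis .
qed

text \<open>Chernoff's exponential-moment bound; the weight factorises over \<open>N\<close>, so the moment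
  generating function of the sum is a product.\<close>
lemma bernoulli_weight_upper_tail_le:
  fixes q c :: "'a \<Rightarrow> real"
  assumes fin: "finite N" and q: "\<And>p. p \<in> N \<Longrightarrow> 0 \<le> q p \<and> q p \<le> 1"
    and c: "\<And>p. p \<in> N \<Longrightarrow> \<bar>c p\<bar> \<le> C" and l: "0 \<le> l"
  shows "(\<Sum>X\<in>Pow N. if t < (\<Sum>p\<in>N. c p * (of_bool (p \<in> X) - q p)) then bernoulli_weight q N X else 0)
          \<le> exp (- l * t + (\<Sum>p\<in>N. q p) * exp_remainder (l * C))"
proof -
  define S where "S X = (\<Sum>p\<in>N. c p * (of_bool (p \<in> X) - q p))" for X
  define f where "f p b = (if b then q p else 1 - q p) * exp (l * c p * (of_bool b - q p))" for p b
  have "(\<Sum>X\<in>Pow N. if t < S X then bernoulli_weight q N X else 0)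
      \<le> (\<Sum>X\<in>Pow N. bernoulli_weight q N X * exp (l * (S X - t)))"
  proof (rule sum_mono)
    fix X
    have "1 \<le> exp (l * (S X - t))" if "t < S X"
      using l that exp_ge_add_one_self[of "l * (S X - t)"] by (simp add: add_increasing2)
    then show "(if t < S X then bernoulli_weight q N X else 0) \<le> bernoulli_weight q N X * exp (l * (S X - t))"
      using bernoulli_weight_nonneg[of N q X] q mult_left_mono[of 1 "exp (l * (S X - t))"]
      by auto
  qed
  also have "\<dots> = (\<Sum>X\<in>Pow N. exp (- l * t) * (\<Prod>p\<in>N. f p (p \<in> X)))"
  proof (rule sum.cong[OF refl])
    fix X
    have "exp (l * (S X - t)) = exp (- l * t) * exp (\<Sum>p\<in>N. l * c p * (of_bool (p \<in> X) - q p))"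
      by (simp add: S_def sum_distrib_left algebra_simps flip: exp_add)
    also have "\<dots> = exp (- l * t) * (\<Prod>p\<in>N. exp (l * c p * (of_bool (p \<in> X) - q p)))"
      using fin by (simp add: exp_sum)
    finally show "bernoulli_weight q N X * exp (l * (S X - t)) = exp (- l * t) * (\<Prod>p\<in>N. f p (p \<in> X))"
      by (simp add: bernoulli_weight_def f_def prod.distrib)
  qed
  also have "\<dots> = exp (- l * t) * (\<Prod>p\<in>N. f p True + f p False)"
    by (simp add: sum_Pow_prod_eq_prod_add[OF fin] flip: sum_distrib_left)
  also have "\<dots> \<le> exp (- l * t) * (\<Prod>p\<in>N. exp (q p * exp_remainder (l * C)))"
  proof (intro mult_left_mono prod_mono conjI)
    fix p assume p: "p \<in> N"
    show "0 \<le> f p True + f p False" using q[OF p] by (auto simp: f_def)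
    have "f p True + f p False \<le> exp (q p * exp_remainder (l * c p))"
      using bernoulli_centered_mgf_le[of "q p" "l * c p"] q[OF p] by (simp add: f_def mult.assoc)
    also have "\<dots> \<le> exp (q p * exp_remainder (l * C))"
      using q[OF p] c[OF p] l by (auto intro!: mult_left_mono exp_remainder_le_of_abs_le simp: abs_mult)
    finally show "f p True + f p False \<le> exp (q p * exp_remainder (l * C))" .
  qed auto
  also have "\<dots> = exp (- l * t + (\<Sum>p\<in>N. q p) * exp_remainder (l * C))"
    using fin by (simp add: sum_distrib_right flip: exp_sum exp_add)
  finally show ?thesis unfolding S_def .
qed

lemma bernoulli_weight_abs_tail_le:
  fixes q c :: "'a \<Rightarrow> real" and C V t :: real
  assumes fin: "finite N" and q: "\<And>p. p \<in> N \<Longrightarrow> 0 \<le> q p \<and> q p \<le> 1"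
    and c: "\<And>p. p \<in> N \<Longrightarrow> \<bar>c p\<bar> \<le> C" and C: "0 < C"
    and V: "(\<Sum>p\<in>N. q p) \<le> V" and t: "0 \<le> t"
  shows "(\<Sum>X\<in>Pow N. if t < \<bar>\<Sum>p\<in>N. c p * (of_bool (p \<in> X) - q p)\<bar> then bernoulli_weight q N X else 0)
          \<le> 2 * exp (- t\<^sup>2 / (2 * (C\<^sup>2 * V + C * t / 3)))"
proof -
  define D where "D = C\<^sup>2 * V + C * t / 3"
  define l where "l = t / D"
  define S where "S c' X = (\<Sum>p\<in>N. c' p * (of_bool (p \<in> X) - q p))" for c' X
  define tail where "tail c' = (\<Sum>X\<in>Pow N. if t < S c' X then bernoulli_weight q N X else 0)" for c'
  have V0: "0 \<le> V" using V q by (meson order.trans sum_nonneg)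
  have l: "0 \<le> l" using t C V0 by (simp add: l_def D_def)
  have one_sided: "tail c' \<le> exp (- t\<^sup>2 / (2 * D))" if "\<And>p. p \<in> N \<Longrightarrow> \<bar>c' p\<bar> \<le> C" for c'
  proof -
    have "tail c' \<le> exp (- l * t + (\<Sum>p\<in>N. q p) * exp_remainder (l * C))"
      unfolding tail_def S_def by (rule bernoulli_weight_upper_tail_le[OF fin q that l])
    also have "\<dots> \<le> exp (- l * t + V * exp_remainder (l * C))"
      using V exp_remainder_nonneg by (simp add: mult_right_mono)
    also have "\<dots> \<le> exp (- t\<^sup>2 / (2 * D))"
      using Bernstein_exponent_le[OF t C V0] by (simp add: l_def D_def)
    finally show ?thesis .
  qed
  have "S (\<lambda>p. - c p) X = - S c X" for X
    by (simp add: S_def sum_negf)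
  then have "(\<Sum>X\<in>Pow N. if t < \<bar>S c X\<bar> then bernoulli_weight q N X else 0) \<le> tail c + tail (\<lambda>p. - c p)"
    unfolding tail_def sum.distrib[symmetric]
    by (intro sum_mono) (auto simp: bernoulli_weight_nonneg q)
  also have "\<dots> \<le> 2 * exp (- t\<^sup>2 / (2 * D))"
    using one_sided[of c] one_sided[of "\<lambda>p. - c p"] c by simp
  finally show ?thesis unfolding S_def D_def .
qed

lemma finite_node_pairs: "finite (node_pairs n)"
  by (rule finite_subset[of _ "{..<n} \<times> {..<n}"]) (auto simp: node_pairs_def)

lemma card_node_pairs_le: "card (node_pairs n) \<le> n\<^sup>2"
proof -
  have "card (node_pairs n) \<le> card ({..<n} \<times> {..<n})"
    by (intro card_mono) (auto simp: node_pairs_def)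
  then show ?thesis by (simp add: power2_eq_square)
qed

lemma node_pairs_Suc: "node_pairs (Suc n) = node_pairs n \<union> (\<lambda>i. (i, n)) ` {..<n}"
  unfolding node_pairs_def by auto

lemma sum_square_eq_sum_node_pairs:
  fixes h :: "nat \<Rightarrow> nat \<Rightarrow> real"
  assumes "\<And>i. h i i = 0"
  shows "(\<Sum>i<n. \<Sum>j<n. h i j) = (\<Sum>p\<in>node_pairs n. h (fst p) (snd p) + h (snd p) (fst p))"
proof (induction n)
  case 0
  then show ?case by (simp add: node_pairs_def)
next
  case (Suc n)
  have "(\<Sum>i<Suc n. \<Sum>j<Suc n. h i j) = (\<Sum>i<n. \<Sum>j<n. h i j) + (\<Sum>i<n. h i n + h n i) + h n n"
    by (simp add: sum.distrib)
  moreover have "(\<Sum>p\<in>node_pairs (Suc n). h (fst p) (snd p) + h (snd p) (fst p))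
      = (\<Sum>p\<in>node_pairs n. h (fst p) (snd p) + h (snd p) (fst p))
        + (\<Sum>p\<in>(\<lambda>i. (i, n)) ` {..<n}. h (fst p) (snd p) + h (snd p) (fst p))"
    unfolding node_pairs_Suc
    by (rule sum.union_disjoint) (auto simp: finite_node_pairs, auto simp: node_pairs_def)
  moreover have "(\<Sum>p\<in>(\<lambda>i. (i, n)) ` {..<n}. h (fst p) (snd p) + h (snd p) (fst p)) = (\<Sum>i<n. h i n + h n i)"
    by (subst sum.reindex) (auto simp: inj_on_def)
  ultimately show ?case using Suc assms by simp
qed

lemma adj_node_pair:
  assumes "p \<in> node_pairs n"
  shows "adj A (fst p) (snd p) = of_bool (p \<in> A)" "adj A (snd p) (fst p) = of_bool (p \<in> A)"
  using assms by (auto simp: adj_def node_pairs_def)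

definition O_tilde_coeff :: "(nat \<Rightarrow> nat) \<Rightarrow> nat \<Rightarrow> nat \<Rightarrow> nat \<times> nat \<Rightarrow> real" where
  "O_tilde_coeff e a b p =
     (if a = b then 2 * of_bool (e (fst p) = a \<and> e (snd p) = a)
      else of_bool (e (fst p) = a \<and> e (snd p) = b) + of_bool (e (snd p) = a \<and> e (fst p) = b))"

lemma abs_O_tilde_coeff_le: "\<bar>O_tilde_coeff e a b p\<bar> \<le> 2"
  unfolding O_tilde_coeff_def
  by (cases "e (fst p) = a"; cases "e (snd p) = a"; cases "e (fst p) = b"; cases "e (snd p) = b") auto

lemma O_tilde_eq_sum_node_pairs:
  "O_tilde n A e a b = (\<Sum>p\<in>node_pairs n. O_tilde_coeff e a b p * of_bool (p \<in> A))"
proof (cases "a = b")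
  case True
  define h where "h i j = (if i < j then adj A i j * of_bool (e i = a \<and> e j = a) else 0)" for i j
  have "O_count n A e a a = (\<Sum>i<n. \<Sum>j<n. h i j)"
    unfolding O_count_def h_def of_bool_def by simp
  also have "\<dots> = (\<Sum>p\<in>node_pairs n. h (fst p) (snd p) + h (snd p) (fst p))"
    by (rule sum_square_eq_sum_node_pairs) (simp add: h_def)
  also have "\<dots> = (\<Sum>p\<in>node_pairs n. of_bool (p \<in> A) * of_bool (e (fst p) = a \<and> e (snd p) = a))"
    by (intro sum.cong refl) (auto simp: adj_node_pair h_def node_pairs_def)
  finally show ?thesis
    using True by (simp add: O_tilde_def O_tilde_coeff_def sum_distrib_left mult_ac)
next
  case False
  define h where "h i j = adj A i j * of_bool (e i = a \<and> e j = b)" for i j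
  have "O_count n A e a b = (\<Sum>i<n. \<Sum>j<n. h i j)"
    using False unfolding O_count_def h_def of_bool_def by simp
  also have "\<dots> = (\<Sum>p\<in>node_pairs n. h (fst p) (snd p) + h (snd p) (fst p))"
    by (rule sum_square_eq_sum_node_pairs) (simp add: h_def adj_def)
  also have "\<dots> = (\<Sum>p\<in>node_pairs n. O_tilde_coeff e a b p * of_bool (p \<in> A))"
    using False by (intro sum.cong refl) (simp add: h_def adj_node_pair O_tilde_coeff_def algebra_simps)
  finally show ?thesis using False by (simp add: O_tilde_def)
qed

lemma A_weight_eq_bernoulli_weight:
  "A_weight n P z A = bernoulli_weight (\<lambda>p. P (z (fst p)) (z (snd p))) (node_pairs n) A"
  unfolding A_weight_def bernoulli_weight_def by simp

lemma cond_exp_O_tilde: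
  "cond_exp_Z n P (\<lambda>z' A'. O_tilde n A' e a b) z
    = (\<Sum>p\<in>node_pairs n. O_tilde_coeff e a b p * P (z (fst p)) (z (snd p)))"
proof -
  define q where "q p = P (z (fst p)) (z (snd p))" for p
  have "cond_exp_Z n P (\<lambda>z' A'. O_tilde n A' e a b) z
     = (\<Sum>A\<in>Pow (node_pairs n). \<Sum>p\<in>node_pairs n.
          O_tilde_coeff e a b p * (bernoulli_weight q (node_pairs n) A * of_bool (p \<in> A)))"
    unfolding cond_exp_Z_def O_tilde_eq_sum_node_pairs A_weight_eq_bernoulli_weight q_def[symmetric]
    by (simp add: sum_distrib_left algebra_simps)
  also have "\<dots> = (\<Sum>p\<in>node_pairs n. O_tilde_coeff e a b p *
      (\<Sum>A\<in>Pow (node_pairs n). bernoulli_weight q (node_pairs n) A * of_bool (p \<in> A)))"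
    by (subst sum.swap) (simp add: sum_distrib_left)
  also have "\<dots> = (\<Sum>p\<in>node_pairs n. O_tilde_coeff e a b p * q p)"
    by (intro sum.cong refl) (simp only: sum_bernoulli_weight_indicator[OF finite_node_pairs])
  finally show ?thesis by (simp add: q_def)
qed

lemma O_tilde_deviation_eq:
  "O_tilde n A e a b - cond_exp_Z n P (\<lambda>z' A'. O_tilde n A' e a b) z
   = (\<Sum>p\<in>node_pairs n. O_tilde_coeff e a b p * (of_bool (p \<in> A) - P (z (fst p)) (z (snd p))))"
  unfolding cond_exp_O_tilde O_tilde_eq_sum_node_pairs[of n A]
  by (simp add: right_diff_distrib flip: sum_subtractf)

lemma finite_max_norm_entries:
  fixes M :: "nat \<Rightarrow> nat \<Rightarrow> real"
  shows "finite {\<bar>M a b\<bar> | a b. a < K \<and> b < K}"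
proof -
  have "{\<bar>M a b\<bar> | a b. a < K \<and> b < K} = (\<lambda>(a, b). \<bar>M a b\<bar>) ` ({..<K} \<times> {..<K})"
    by auto
  then show ?thesis by simp
qed

lemma abs_le_max_norm:
  assumes "a < K" "b < K"
  shows "\<bar>M a b\<bar> \<le> max_norm K M"
  unfolding max_norm_def by (rule Max_ge[OF finite_max_norm_entries]) (use assms in auto)

lemma max_norm_nonneg: "1 \<le> K \<Longrightarrow> 0 \<le> max_norm K M"
  using abs_le_max_norm[of 0 K 0 M] by linarith

lemma max_norm_gtD:
  assumes "1 \<le> K" "t < max_norm K M"
  obtains a b where "a < K" "b < K" "t < \<bar>M a b\<bar>"
proof -
  have "\<bar>M 0 0\<bar> \<in> {\<bar>M a b\<bar> | a b. a < K \<and> b < K}"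
    using assms(1) by (intro CollectI exI[of _ 0]) auto
  then have "{\<bar>M a b\<bar> | a b. a < K \<and> b < K} \<noteq> {}"
    by blast
  then have "max_norm K M \<in> {\<bar>M a b\<bar> | a b. a < K \<and> b < K}"
    unfolding max_norm_def by (rule Max_in[OF finite_max_norm_entries])
  then show ?thesis using assms(2) that by auto
qed

lemma finite_labellings: "finite (labellings n K)"
  by (simp add: labellings_def finite_PiE)

lemma card_labellings: "card (labellings n K) = K ^ n"
  by (simp add: labellings_def card_PiE)

lemma labelling_node_pair_lt:
  assumes "z \<in> labellings n K" "p \<in> node_pairs n"
  shows "z (fst p) < K" "z (snd p) < K"
  using assms by (auto simp: labellings_def node_pairs_def)

lemma A_weight_nonneg:
  assumes "z \<in> labellings n K" and "\<And>a b. a < K \<Longrightarrow> b < K \<Longrightarrow> 0 \<le> P a b \<and> P a b \<le> 1"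
  shows "0 \<le> A_weight n P z A"
  unfolding A_weight_eq_bernoulli_weight
  using assms labelling_node_pair_lt[OF assms(1)] by (intro bernoulli_weight_nonneg) auto

lemma sum_if_ex_le_sum_sum:
  fixes w :: "'b \<Rightarrow> real"
  assumes "finite S" "finite I" "\<And>A. A \<in> S \<Longrightarrow> 0 \<le> w A"
  shows "(\<Sum>A\<in>S. if \<exists>i\<in>I. E i A then w A else 0) \<le> (\<Sum>i\<in>I. \<Sum>A\<in>S. if E i A then w A else 0)"
proof -
  have "(if \<exists>i\<in>I. E i A then w A else 0) \<le> (\<Sum>i\<in>I. if E i A then w A else 0)" if "A \<in> S" for A
  proof (cases "\<exists>i\<in>I. E i A")
    case True
    then obtain i where "i \<in> I" "E i A" by blast
    then show ?thesis
      using assms that member_le_sum[of i I "\<lambda>i. if E i A then w A else 0"] by auto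
  qed (use assms that in \<open>auto intro: sum_nonneg\<close>)
  then have "(\<Sum>A\<in>S. if \<exists>i\<in>I. E i A then w A else 0) \<le> (\<Sum>A\<in>S. \<Sum>i\<in>I. if E i A then w A else 0)"
    by (rule sum_mono)
  also have "\<dots> = (\<Sum>i\<in>I. \<Sum>A\<in>S. if E i A then w A else 0)"
    by (rule sum.swap)
  finally show ?thesis .
qed

lemma O_tilde_deviation_tail_le:
  fixes x :: real
  assumes K: "1 \<le> K" and z: "z \<in> labellings n K"
    and P_range: "\<And>a b. a < K \<Longrightarrow> b < K \<Longrightarrow> 0 \<le> P a b \<and> P a b \<le> 1"
    and x: "0 < x"
  shows "(\<Sum>A\<in>Pow (node_pairs n).
            if x * real n ^ 2 < \<bar>O_tilde n A e a b - cond_exp_Z n P (\<lambda>z' A'. O_tilde n A' e a b) z\<bar>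
            then A_weight n P z A else 0)
         \<le> 2 * exp (- (x ^ 2 * real n ^ 2) / (8 * max_norm K P + 4 * x / 3))"
proof -
  let ?q = "\<lambda>p. P (z (fst p)) (z (snd p))"
  note zK = labelling_node_pair_lt[OF z]
  have q: "0 \<le> ?q p \<and> ?q p \<le> 1" if "p \<in> node_pairs n" for p
    using P_range zK[OF that] by simp
  have "?q p \<le> max_norm K P" if "p \<in> node_pairs n" for p
    using abs_le_max_norm[OF zK[OF that], of P] by simp
  then have "(\<Sum>p\<in>node_pairs n. ?q p) \<le> real (card (node_pairs n)) * max_norm K P"
    by (rule sum_bounded_above)
  also have "\<dots> \<le> real n ^ 2 * max_norm K P"
    using card_node_pairs_le[of n] max_norm_nonneg[OF K]
    by (intro mult_right_mono) (simp_all flip: of_nat_power)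
  finally have V: "(\<Sum>p\<in>node_pairs n. ?q p) \<le> real n ^ 2 * max_norm K P" .
  have exponent: "- (x * real n ^ 2)\<^sup>2 / (2 * (2\<^sup>2 * (real n ^ 2 * max_norm K P) + 2 * (x * real n ^ 2) / 3))
      = - (x ^ 2 * real n ^ 2) / (8 * max_norm K P + 4 * x / 3)"
  proof (cases "n = 0")
    case False
    have "2 * (2\<^sup>2 * (real n ^ 2 * max_norm K P) + 2 * (x * real n ^ 2) / 3)
        = real n ^ 2 * (8 * max_norm K P + 4 * x / 3)"
      by (simp add: algebra_simps)
    moreover have "(x * real n ^ 2)\<^sup>2 = real n ^ 2 * (x ^ 2 * real n ^ 2)"
      by (simp add: power2_eq_square)
    ultimately show ?thesis using False by simp
  qed simp
  have t: "0 \<le> x * real n ^ 2" using x by simp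
  have "(\<Sum>X\<in>Pow (node_pairs n).
          if x * real n ^ 2 < \<bar>\<Sum>p\<in>node_pairs n. O_tilde_coeff e a b p * (of_bool (p \<in> X) - ?q p)\<bar>
          then bernoulli_weight ?q (node_pairs n) X else 0)
      \<le> 2 * exp (- (x * real n ^ 2)\<^sup>2 / (2 * (2\<^sup>2 * (real n ^ 2 * max_norm K P) + 2 * (x * real n ^ 2) / 3)))"
    using bernoulli_weight_abs_tail_le[OF finite_node_pairs q abs_O_tilde_coeff_le _ V t] by simp
  then show ?thesis
    unfolding O_tilde_deviation_eq A_weight_eq_bernoulli_weight exponent .
qed

lemma cond_max_O_tilde_deviation_tail_le:
  fixes x :: real
  assumes K: "1 \<le> K" and z: "z \<in> labellings n K"
    and P_range: "\<And>a b. a < K \<Longrightarrow> b < K \<Longrightarrow> 0 \<le> P a b \<and> P a b \<le> 1"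
    and x: "0 < x"
  shows "(\<Sum>A\<in>Pow (node_pairs n). if \<exists>e\<in>labellings n K.
           max_norm K (\<lambda>a b. O_tilde n A e a b
              - cond_exp_Z n P (\<lambda>z' A'. O_tilde n A' e a b) z) > x * real n ^ 2 then A_weight n P z A else 0)
         \<le> 2 * real K ^ (n + 2) * exp (- (x ^ 2 * real n ^ 2) / (8 * max_norm K P + 4 * x / 3))"
proof -
  define B where "B = 2 * exp (- (x ^ 2 * real n ^ 2) / (8 * max_norm K P + 4 * x / 3))"
  define I where "I = labellings n K \<times> {..<K} \<times> {..<K}"
  define dev where
    "dev A = (\<lambda>(e, a, b). O_tilde n A e a b - cond_exp_Z n P (\<lambda>z' A'. O_tilde n A' e a b) z)" for A
  note w = A_weight_nonneg[OF z P_range]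
  have "(\<Sum>A\<in>Pow (node_pairs n). if \<exists>e\<in>labellings n K.
           max_norm K (\<lambda>a b. O_tilde n A e a b - cond_exp_Z n P (\<lambda>z' A'. O_tilde n A' e a b) z) > x * real n ^ 2
           then A_weight n P z A else 0)
      \<le> (\<Sum>A\<in>Pow (node_pairs n). if \<exists>i\<in>I. x * real n ^ 2 < \<bar>dev A i\<bar> then A_weight n P z A else 0)"
    by (intro sum_mono) (auto simp: w I_def dev_def elim!: max_norm_gtD[OF K])
  also have "\<dots> \<le> (\<Sum>i\<in>I. \<Sum>A\<in>Pow (node_pairs n). if x * real n ^ 2 < \<bar>dev A i\<bar> then A_weight n P z A else 0)"
    by (rule sum_if_ex_le_sum_sum) (simp_all add: finite_node_pairs finite_labellings I_def w)
  also have "\<dots> \<le> (\<Sum>i\<in>I. B)"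
    unfolding B_def dev_def
    by (intro sum_mono) (clarify, rule O_tilde_deviation_tail_le[OF K z P_range x])
  also have "\<dots> = 2 * real K ^ (n + 2) * exp (- (x ^ 2 * real n ^ 2) / (8 * max_norm K P + 4 * x / 3))"
    by (simp add: B_def I_def card_cartesian_product card_labellings power_add power2_eq_square)
  finally show ?thesis .
qed

lemma sum_Z_weight:
  assumes "(\<Sum>a<K. \<pi> a) = 1"
  shows "(\<Sum>z\<in>labellings n K. Z_weight n \<pi> z) = 1"
proof -
  have "(\<Prod>i\<in>{0..<n}. \<Sum>a\<in>{0..<K}. \<pi> a) = (\<Sum>z\<in>labellings n K. \<Prod>i\<in>{0..<n}. \<pi> (z i))"
    unfolding labellings_def by (rule prod_sum_PiE) auto
  then show ?thesis using assms by (simp add: Z_weight_def atLeast0LessThan)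
qed

lemma sbm_prob_le:
  assumes pi_nonneg: "\<And>a. a < K \<Longrightarrow> 0 \<le> \<pi> a" and pi_sum: "(\<Sum>a<K. \<pi> a) = 1"
    and cond: "\<And>z. z \<in> labellings n K \<Longrightarrow>
      (\<Sum>A\<in>Pow (node_pairs n). if E z A then A_weight n P z A else 0) \<le> B"
  shows "sbm_prob n K \<pi> P E \<le> B"
proof -
  have "sbm_prob n K \<pi> P E
      = (\<Sum>z\<in>labellings n K. Z_weight n \<pi> z * (\<Sum>A\<in>Pow (node_pairs n). if E z A then A_weight n P z A else 0))"
    unfolding sbm_prob_def by (auto simp: sum_distrib_left intro!: sum.cong)
  also have "\<dots> \<le> (\<Sum>z\<in>labellings n K. Z_weight n \<pi> z * B)"
    using pi_nonneg cond
    by (intro sum_mono mult_left_mono) (auto simp: Z_weight_def labellings_def PiE_iff intro!: prod_nonneg)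
  also have "\<dots> = B"
    using sum_Z_weight[OF pi_sum] by (simp flip: sum_distrib_right)
  finally show ?thesis .
qed

theorem lemmaA2:
  fixes n K :: nat and \<pi> :: "nat \<Rightarrow> real" and P :: "nat \<Rightarrow> nat \<Rightarrow> real" and x :: real
  assumes K_pos: "K \<ge> 1"
    and pi_nonneg: "\<And>a. a < K \<Longrightarrow> \<pi> a \<ge> 0"
    and pi_sum: "(\<Sum>a<K. \<pi> a) = 1"
    and P_sym: "\<And>a b. a < K \<Longrightarrow> b < K \<Longrightarrow> P a b = P b a"
    and P_range: "\<And>a b. a < K \<Longrightarrow> b < K \<Longrightarrow> 0 \<le> P a b \<and> P a b \<le> 1"
    and x_pos: "x > 0"
  shows "sbm_prob n K \<pi> P (\<lambda>z A. \<exists>e\<in>labellings n K.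
           max_norm K (\<lambda>a b. O_tilde n A e a b
              - cond_exp_Z n P (\<lambda>z' A'. O_tilde n A' e a b) z) > x * real n ^ 2)
         \<le> 2 * real K ^ (n + 2) * exp (- (x ^ 2 * real n ^ 2) / (8 * max_norm K P + 4 * x / 3))"
  by (rule sbm_prob_le[OF pi_nonneg pi_sum cond_max_O_tilde_deviation_tail_le[OF K_pos _ P_range x_pos]])

end
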